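(* Let $k\ge 1$ be an integer and let $F(z,u)=\sum_{P} z^{\mathrm{up}(P)}u^{\mathrm{end}(P)}$, where the sum runs over all nonempty $k$-Dyck prefixes $P$ whose last step is an up-step, $\mathrm{up}(P)$ is the number of up-steps of $P$ and $\mathrm{end}(P)$ is the height at which $P$ ends. Then, as formal power series in $z$ (with coefficients polynomials in $u$), $$F(z,u)=zu^k\,\frac{\overline{u}-u}{1-u+zu^{k+1}},$$ where $$\overline{u}=\sum_{\ell\ge0}\frac1{1+\ell(k+1)}\binom{1+\ell(k+1)}{\ell}z^\ell$$ is the power series solution of $1-\overline{u}+z\overline{u}^{k+1}=0$.
   Context: Fix an integer $k\ge1$. A $k$-Dyck prefix is a lattice path starting at $(0,0)$ using up-steps $(1,k)$ and down-steps $(1,-1)$ that never goes below the $x$-axis. The height (level) of a point is its $y$-coordinate. *)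

theory Defs
  imports "HOL-Computational_Algebra.Computational_Algebra"
begin

text \<open>A path is a list of steps; True = up-step (1,k), False = down-step (1,-1).\<close>

definition step_height :: "nat \<Rightarrow> bool \<Rightarrow> int" where
  "step_height k s = (if s then int k else -1)"

definition path_height :: "nat \<Rightarrow> bool list \<Rightarrow> int" where
  "path_height k P = sum_list (map (step_height k) P)"

definition is_kdyck_prefix :: "nat \<Rightarrow> bool list \<Rightarrow> bool" where
  "is_kdyck_prefix k P = (\<forall>i\<le>length P. path_height k (take i P) \<ge> 0)"

definition num_up :: "bool list \<Rightarrow> nat" where
  "num_up P = length (filter id P)"

definition F_paths :: "nat \<Rightarrow> nat \<Rightarrow> bool list set" where
  "F_paths k n = {P. is_kdyck_prefix k P \<and> P \<noteq> [] \<and> last P \<and> num_up P = n}"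

definition F_gf :: "nat \<Rightarrow> rat poly fps" where
  "F_gf k = Abs_fps (\<lambda>n. \<Sum>P\<in>F_paths k n. monom 1 (nat (path_height k P)))"

text \<open>The variable u, as a constant power series.\<close>
definition U :: "rat poly fps" where
  "U = fps_const [:0, 1:]"

definition ubar :: "nat \<Rightarrow> rat poly fps" where
  "ubar k = Abs_fps (\<lambda>l. [: of_nat ((1 + l*(k+1)) choose l) / of_nat (1 + l*(k+1)) :])"

end

theory Submission
  imports Defs
begin

(* A path counted by F is a k-Dyck prefix followed by an up-step, and a nonempty prefix
   ending with a down-step is a prefix of positive height followed by that step.  For the
   height polynomial S_n(u) of the prefixes with n up-steps this gives
     S_n(u) (1 - u) = c_n - [n = 0] u - u^(k+1) S_(n-1)(u),
   where c_n is the number of k-Dyck paths (prefixes ending at height 0), and hence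
   F (1 - u + z u^(k+1)) = z u^k (C(z) - u) with C(z) = sum_n c_n z^n.
   Kernel method: substituting for u the power series s with 1 - s + z s^(k+1) = 0 kills
   the left-hand side, so C = s.  The series s is B_(k+1), where B_p = 1 + z B_p^p has
   B_p^m = sum_n raney p m n z^n for the Raney numbers, characterised by
   raney p (m+1) n = raney p m n + raney p (m+p) (n-1) and given by
   raney p m n = m / (m + p n) * binomial (m + p n) n. *)

fun raney :: "nat \<Rightarrow> nat \<Rightarrow> nat \<Rightarrow> nat" where
  "raney p m 0 = 1"
| "raney p 0 (Suc n) = 0"
| "raney p (Suc m) (Suc n) = raney p m (Suc n) + raney p (m + p) n"

lemma raney_closed_form:
  assumes "0 < p"
  shows "(m + p * n) * raney p m n = m * (m + p * n choose n)"
  using assms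
proof (induction p m n rule: raney.induct)
  case (3 p m n)
  define N where "N = m + p * Suc n"
  define a where "a = N choose n"
  define b where "b = N choose Suc n"
  have IH1: "N * raney p m (Suc n) = m * b"
    using "3.IH"(1) "3.prems" by (simp add: N_def b_def)
  have IH2: "N * raney p (m + p) n = (m + p) * a"
    using "3.IH"(2) "3.prems" by (simp add: N_def a_def algebra_simps)
  have pascal: "Suc m + p * Suc n choose Suc n = a + b"
    by (simp only: N_def a_def b_def add_Suc binomial_Suc_Suc)
  have "1 * Suc n \<le> p * Suc n" using "3.prems" by (intro mult_le_mono1) simp
  then have "n < N" by (simp add: N_def)
  have absorb: "Suc n * b = (N - n) * a"
    unfolding a_def b_def by (rule trans[OF binomial_absorption binomial_absorb_comp[symmetric]])
  have absorb_int: "(int n + 1) * int b = (int N - int n) * int a"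
    using arg_cong[OF absorb, of int] \<open>n < N\<close> by (simp add: distrib_right)
  have "(1 + int N) * (int m * int b + (int m + int p) * int a)
      = int N * (1 + int m) * (int a + int b) + int p * ((int N - int n) * int a - (int n + 1) * int b)"
    by (simp add: N_def algebra_simps)
  then have "(1 + int N) * (int m * int b + (int m + int p) * int a) = int N * (1 + int m) * (int a + int b)"
    using absorb_int by simp
  then have "int (Suc N * (m * b + (m + p) * a)) = int (N * Suc m * (a + b))"
    by (simp only: of_nat_mult of_nat_add of_nat_Suc)
  then have key: "Suc N * (m * b + (m + p) * a) = N * Suc m * (a + b)"
    by (simp only: of_nat_eq_iff)
  have "N * (Suc N * raney p (Suc m) (Suc n)) = Suc N * (N * raney p m (Suc n) + N * raney p (m + p) n)"
    by (simp add: algebra_simps)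
  also have "\<dots> = N * (Suc m * (a + b))"
    unfolding IH1 IH2 key by (simp only: mult.assoc)
  finally have "Suc N * raney p (Suc m) (Suc n) = Suc m * (a + b)"
    using \<open>n < N\<close> by simp
  then show ?case by (simp only: pascal) (simp add: N_def)
qed simp_all

lemma raney_Suc:
  "raney p (Suc m) n = raney p m n + (if n = 0 then 0 else raney p (m + p) (n - 1))"
  by (cases n) simp_all

definition raney_fps :: "nat \<Rightarrow> nat \<Rightarrow> 'a::comm_ring_1 fps" where
  "raney_fps p m = Abs_fps (\<lambda>n. of_nat (raney p m n))"

lemma raney_fps_0 [simp]: "raney_fps p 0 = 1"
proof (rule fps_ext)
  fix n show "raney_fps p 0 $ n = (1 :: 'a fps) $ n"
    by (cases n) (simp_all add: raney_fps_def)
qed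

lemma raney_fps_Suc: "raney_fps p (Suc m) = raney_fps p m + fps_X * raney_fps p (m + p)"
  by (rule fps_ext) (simp add: raney_fps_def raney_Suc)

lemma raney_fps_add: "raney_fps p a * raney_fps p b = raney_fps p (a + b)"
proof (rule fps_ext)
  fix n show "(raney_fps p a * raney_fps p b) $ n = raney_fps p (a + b) $ n"
  proof (induction n arbitrary: a)
    case 0
    then show ?case
      by (induction a) (simp_all add: raney_fps_Suc distrib_right)
  next
    case (Suc n)
    then show ?case
      by (induction a) (simp_all add: raney_fps_Suc distrib_right mult.assoc add_ac)
  qed
qed

lemma raney_fps_power: "raney_fps p 1 ^ m = raney_fps p m"
  by (induction m) (simp_all add: raney_fps_add)

lemma raney_fps_equation: "1 - raney_fps p 1 + fps_X * raney_fps p 1 ^ p = (0 :: 'a::comm_ring_1 fps)"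
  unfolding raney_fps_power using raney_fps_Suc[of p 0, where 'a='a] by simp

lemma ubar_eq_raney_fps: "ubar k = raney_fps (k + 1) 1"
proof (rule fps_ext)
  fix l
  have "(1 + l * (k + 1)) * raney (k + 1) 1 l = (1 + l * (k + 1) choose l)"
    using raney_closed_form[of "k + 1" 1 l] by (simp add: mult.commute)
  then have "(of_nat (raney (k + 1) 1 l) :: rat) * of_nat (1 + l * (k + 1)) = of_nat (1 + l * (k + 1) choose l)"
    by (metis of_nat_mult mult.commute)
  then have "(of_nat (raney (k + 1) 1 l) :: rat) = of_nat (1 + l * (k + 1) choose l) / of_nat (1 + l * (k + 1))"
    by (rule eq_divide_imp[rotated]) (simp only: of_nat_eq_0_iff add_is_0 one_neq_zero simp_thms)
  then show "ubar k $ l = raney_fps (k + 1) 1 $ l"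
    by (simp add: ubar_def raney_fps_def of_nat_poly)
qed

lemma fps_nth_eq_of_telescoping:
  fixes c :: "nat \<Rightarrow> 'a::comm_ring_1" and s :: "'a fps" and G :: "nat \<Rightarrow> 'a fps"
  assumes G0: "G 0 = 0"
    and telescoping: "\<And>n. fps_const (c n) - (if n = 0 then s else 0) = G n - fps_X * G (Suc n)"
  shows "s $ n = c n"
proof -
  have partial_sum: "(\<Sum>i\<le>N. fps_const (c i) * fps_X ^ i) - s = - (fps_X ^ Suc N * G (Suc N))" for N
  proof (induction N)
    case 0
    then show ?case using telescoping[of 0] G0 by simp
  next
    case (Suc N)
    have step: "fps_const (c (Suc N)) = G (Suc N) - fps_X * G (Suc (Suc N))"
      using telescoping[of "Suc N"] by simp
    have "(\<Sum>i\<le>Suc N. fps_const (c i) * fps_X ^ i) - s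
        = ((\<Sum>i\<le>N. fps_const (c i) * fps_X ^ i) - s) + fps_X ^ Suc N * fps_const (c (Suc N))"
      by (simp add: algebra_simps)
    also have "\<dots> = - (fps_X ^ Suc N * G (Suc N)) + fps_X ^ Suc N * (G (Suc N) - fps_X * G (Suc (Suc N)))"
      by (simp only: Suc.IH step)
    also have "\<dots> = - (fps_X ^ Suc (Suc N) * G (Suc (Suc N)))"
      by (simp add: algebra_simps)
    finally show ?case .
  qed
  have "(\<Sum>i\<le>n. fps_const (c i) * fps_X ^ i) $ n = c n"
    by (simp add: fps_sum_nth if_distrib[of "(*) _"] cong: if_cong)
  moreover have "(fps_X ^ Suc n * G (Suc n)) $ n = 0"
    by (subst fps_X_power_mult_nth) simp
  ultimately show ?thesis
    using arg_cong[OF partial_sum[of n], of "\<lambda>f. f $ n"] by simp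
qed

lemma path_height_Nil [simp]: "path_height k [] = 0"
  and path_height_append [simp]: "path_height k (xs @ ys) = path_height k xs + path_height k ys"
  and path_height_single [simp]: "path_height k [x] = step_height k x"
  by (simp_all add: path_height_def)

lemma num_up_Nil [simp]: "num_up [] = 0"
  and num_up_append [simp]: "num_up (xs @ ys) = num_up xs + num_up ys"
  and num_up_single [simp]: "num_up [x] = (if x then 1 else 0)"
  by (simp_all add: num_up_def)

lemma path_height_add_length: "path_height k P + int (length P) = int ((k + 1) * num_up P)"
  by (induction P) (auto simp: path_height_def num_up_def step_height_def algebra_simps)

lemma is_kdyck_prefix_Nil [simp]: "is_kdyck_prefix k []"
  by (simp add: is_kdyck_prefix_def)

lemma is_kdyck_prefix_snoc:
  "is_kdyck_prefix k (xs @ [x]) \<longleftrightarrow> is_kdyck_prefix k xs \<and> 0 \<le> path_height k (xs @ [x])"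
  by (auto simp: is_kdyck_prefix_def le_Suc_eq)

lemma path_height_nonneg: "is_kdyck_prefix k P \<Longrightarrow> 0 \<le> path_height k P"
  unfolding is_kdyck_prefix_def by (metis order_refl take_all)

definition kdyck_prefixes :: "nat \<Rightarrow> nat \<Rightarrow> bool list set" where
  "kdyck_prefixes k n = {P. is_kdyck_prefix k P \<and> num_up P = n}"

definition kdyck_paths :: "nat \<Rightarrow> nat \<Rightarrow> bool list set" where
  "kdyck_paths k n = {P \<in> kdyck_prefixes k n. path_height k P = 0}"

lemma finite_kdyck_prefixes: "finite (kdyck_prefixes k n)"
proof (rule finite_subset)
  have "length P \<le> (k + 1) * n" if "P \<in> kdyck_prefixes k n" for P
  proof -
    have "0 \<le> path_height k P" "num_up P = n"
      using that path_height_nonneg by (auto simp: kdyck_prefixes_def)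
    then have "int (length P) \<le> int ((k + 1) * n)"
      using path_height_add_length[of k P] by (simp only: \<open>num_up P = n\<close>)
    then show ?thesis by (simp only: of_nat_le_iff)
  qed
  then show "kdyck_prefixes k n \<subseteq> {P. set P \<subseteq> UNIV \<and> length P \<le> (k + 1) * n}"
    by blast
  show "finite {P :: bool list. set P \<subseteq> UNIV \<and> length P \<le> (k + 1) * n}"
    by (rule finite_lists_length_le) simp
qed

lemma image_snoc_Collect:
  "(\<lambda>xs. xs @ [x]) ` {xs. xs @ [x] \<in> A} = {ys \<in> A. ys \<noteq> [] \<and> last ys = x}"
  by (auto simp: image_iff) (metis append_butlast_last_id)

lemma F_paths_eq: "F_paths k n = {P \<in> kdyck_prefixes k n. P \<noteq> [] \<and> last P}"
  by (auto simp: F_paths_def kdyck_prefixes_def)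

lemma F_paths_0: "F_paths k 0 = {}"
  by (auto simp: F_paths_def num_up_def filter_empty_conv dest: last_in_set)

lemma F_paths_Suc: "F_paths k (Suc n) = (\<lambda>Q. Q @ [True]) ` kdyck_prefixes k n"
proof -
  have "{Q. Q @ [True] \<in> kdyck_prefixes k (Suc n)} = kdyck_prefixes k n"
    using path_height_nonneg by (auto simp: kdyck_prefixes_def is_kdyck_prefix_snoc step_height_def)
  then show ?thesis
    using image_snoc_Collect[of True "kdyck_prefixes k (Suc n)"] by (simp add: F_paths_eq)
qed

lemma down_step_prefixes_eq:
  "{P \<in> kdyck_prefixes k n. P \<noteq> [] \<and> \<not> last P}
     = (\<lambda>Q. Q @ [False]) ` {Q \<in> kdyck_prefixes k n. 0 < path_height k Q}"
proof -
  have "{Q. Q @ [False] \<in> kdyck_prefixes k n} = {Q \<in> kdyck_prefixes k n. 0 < path_height k Q}"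
    by (auto simp: kdyck_prefixes_def is_kdyck_prefix_snoc step_height_def)
  then show ?thesis
    using image_snoc_Collect[of False "kdyck_prefixes k n"] by simp
qed

definition height_sum :: "nat \<Rightarrow> bool list set \<Rightarrow> 'a \<Rightarrow> 'a::comm_semiring_1" where
  "height_sum k A y = (\<Sum>P\<in>A. y ^ nat (path_height k P))"

lemma height_sum_Un:
  "finite A \<Longrightarrow> finite B \<Longrightarrow> A \<inter> B = {} \<Longrightarrow> height_sum k (A \<union> B) y = height_sum k A y + height_sum k B y"
  by (simp add: height_sum_def sum.union_disjoint)

lemma height_sum_F_paths_Suc:
  "height_sum k (F_paths k (Suc n)) y = y ^ k * height_sum k (kdyck_prefixes k n) y"
proof -
  have "height_sum k (F_paths k (Suc n)) y = (\<Sum>Q\<in>kdyck_prefixes k n. y ^ nat (path_height k (Q @ [True])))"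
    unfolding F_paths_Suc height_sum_def by (subst sum.reindex) (auto simp: inj_on_def)
  also have "\<dots> = (\<Sum>Q\<in>kdyck_prefixes k n. y ^ k * y ^ nat (path_height k Q))"
    by (intro sum.cong refl)
      (simp add: kdyck_prefixes_def step_height_def path_height_nonneg nat_add_distrib power_add mult.commute)
  finally show ?thesis by (simp add: height_sum_def sum_distrib_left)
qed

lemma height_sum_down_steps:
  "y * height_sum k {P \<in> kdyck_prefixes k n. P \<noteq> [] \<and> \<not> last P} y
     = height_sum k {Q \<in> kdyck_prefixes k n. 0 < path_height k Q} y"
proof -
  have "y * height_sum k {P \<in> kdyck_prefixes k n. P \<noteq> [] \<and> \<not> last P} y
      = (\<Sum>Q | Q \<in> kdyck_prefixes k n \<and> 0 < path_height k Q. y * y ^ nat (path_height k (Q @ [False])))"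
    unfolding down_step_prefixes_eq height_sum_def sum_distrib_left
    by (subst sum.reindex) (auto simp: inj_on_def)
  also have "\<dots> = height_sum k {Q \<in> kdyck_prefixes k n. 0 < path_height k Q} y"
    unfolding height_sum_def
    by (intro sum.cong refl) (simp add: step_height_def Suc_nat_eq_nat_zadd1 flip: power_Suc)
  finally show ?thesis .
qed

lemma height_sum_kdyck_prefixes_by_height:
  "height_sum k (kdyck_prefixes k n) y
     = of_nat (card (kdyck_paths k n)) + height_sum k {Q \<in> kdyck_prefixes k n. 0 < path_height k Q} y"
proof -
  have parts: "kdyck_paths k n \<union> {Q \<in> kdyck_prefixes k n. 0 < path_height k Q} = kdyck_prefixes k n"
    using path_height_nonneg by (force simp: kdyck_paths_def kdyck_prefixes_def)
  have "height_sum k (kdyck_paths k n) y = of_nat (card (kdyck_paths k n))"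
    by (simp add: height_sum_def kdyck_paths_def)
  moreover have "height_sum k (kdyck_paths k n \<union> {Q \<in> kdyck_prefixes k n. 0 < path_height k Q}) y
      = height_sum k (kdyck_paths k n) y + height_sum k {Q \<in> kdyck_prefixes k n. 0 < path_height k Q} y"
    by (rule height_sum_Un) (auto simp: kdyck_paths_def finite_kdyck_prefixes)
  ultimately show ?thesis by (simp only: parts)
qed

lemma height_sum_kdyck_prefixes_by_last_step:
  "height_sum k (kdyck_prefixes k n) y
     = (if n = 0 then 1 else 0) + height_sum k (F_paths k n) y
       + height_sum k {P \<in> kdyck_prefixes k n. P \<noteq> [] \<and> \<not> last P} y"
proof -
  let ?D = "{P \<in> kdyck_prefixes k n. P \<noteq> [] \<and> \<not> last P}"
  have empty: "{P \<in> kdyck_prefixes k n. P = []} = (if n = 0 then {[]} else {})"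
    by (auto simp: kdyck_prefixes_def)
  have parts: "{P \<in> kdyck_prefixes k n. P = []} \<union> (F_paths k n \<union> ?D) = kdyck_prefixes k n"
    by (auto simp: F_paths_eq)
  have "height_sum k (kdyck_prefixes k n) y
      = height_sum k ({P \<in> kdyck_prefixes k n. P = []} \<union> (F_paths k n \<union> ?D)) y"
    by (simp only: parts)
  also have "\<dots> = height_sum k {P \<in> kdyck_prefixes k n. P = []} y + height_sum k (F_paths k n \<union> ?D) y"
    by (rule height_sum_Un) (auto simp: F_paths_eq finite_kdyck_prefixes)
  also have "height_sum k (F_paths k n \<union> ?D) y = height_sum k (F_paths k n) y + height_sum k ?D y"
    by (rule height_sum_Un) (auto simp: F_paths_eq finite_kdyck_prefixes)
  finally show ?thesis
    by (simp add: empty height_sum_def add.assoc)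
qed

lemma height_sum_kdyck_prefixes_rec:
  fixes y :: "'a::comm_ring_1"
  shows "height_sum k (kdyck_prefixes k n) y * (1 - y)
     = of_nat (card (kdyck_paths k n)) - (if n = 0 then y else 0) - y * height_sum k (F_paths k n) y"
proof -
  have "y * height_sum k (kdyck_prefixes k n) y
      = (if n = 0 then y else 0) + y * height_sum k (F_paths k n) y
        + (height_sum k (kdyck_prefixes k n) y - of_nat (card (kdyck_paths k n)))"
    by (subst (1) height_sum_kdyck_prefixes_by_last_step)
      (simp add: distrib_left height_sum_down_steps height_sum_kdyck_prefixes_by_height)
  then show ?thesis by (simp add: algebra_simps)
qed

lemma height_sum_F_paths_rec:
  fixes y :: "'a::comm_ring_1"
  shows "height_sum k (F_paths k (Suc n)) y * (1 - y) + y ^ (k + 1) * height_sum k (F_paths k n) y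
     = y ^ k * (of_nat (card (kdyck_paths k n)) - (if n = 0 then y else 0))"
proof -
  have "height_sum k (F_paths k (Suc n)) y * (1 - y)
      = y ^ k * (of_nat (card (kdyck_paths k n)) - (if n = 0 then y else 0) - y * height_sum k (F_paths k n) y)"
    by (simp add: height_sum_F_paths_Suc height_sum_kdyck_prefixes_rec mult.assoc)
  then show ?thesis by (simp add: algebra_simps)
qed

lemma card_kdyck_paths: "card (kdyck_paths k n) = raney (k + 1) 1 n"
proof -
  define s :: "int fps" where "s = raney_fps (k + 1) 1"
  define G where "G n = s * height_sum k (F_paths k n) s" for n
  \<comment> \<open>Kernel method: at \<open>u = s\<close> the factor \<open>1 - u\<close> becomes \<open>-z s^(k+1)\<close>, so the
    recurrence for the prefixes turns into a telescoping one.\<close>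
  have kernel: "1 - s = - (fps_X * s ^ (k + 1))"
    using raney_fps_equation[of "k + 1", where 'a=int] unfolding s_def by (simp add: algebra_simps)
  have "fps_const (int (card (kdyck_paths k n))) - (if n = 0 then s else 0) = G n - fps_X * G (Suc n)" for n
  proof -
    have "of_nat (card (kdyck_paths k n)) - (if n = 0 then s else 0) - s * height_sum k (F_paths k n) s
        = height_sum k (kdyck_prefixes k n) s * (1 - s)"
      by (simp add: height_sum_kdyck_prefixes_rec)
    also have "\<dots> = - (fps_X * G (Suc n))"
      by (simp add: kernel G_def height_sum_F_paths_Suc algebra_simps)
    finally show ?thesis
      by (simp add: G_def fps_of_nat algebra_simps)
  qed
  then have "s $ n = int (card (kdyck_paths k n))"
    by (rule fps_nth_eq_of_telescoping[rotated]) (simp add: G_def F_paths_0 height_sum_def)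
  then show ?thesis by (simp add: s_def raney_fps_def)
qed

lemma height_sum_fps_equation:
  fixes u :: "'a::comm_ring_1"
  shows "Abs_fps (\<lambda>n. height_sum k (F_paths k n) u) * (1 - fps_const u + fps_X * fps_const u ^ (k + 1))
     = fps_X * fps_const u ^ k * (Abs_fps (\<lambda>n. of_nat (card (kdyck_paths k n))) - fps_const u)"
    (is "?F * _ = _")
proof -
  have "?F * (1 - fps_const u + fps_X * fps_const u ^ (k + 1))
      = ?F * fps_const (1 - u) + fps_X * (?F * fps_const (u ^ (k + 1)))"
    unfolding fps_const_power fps_const_sub[symmetric] fps_const_1_eq_1 by (simp add: algebra_simps)
  also have "\<dots> = fps_X * (fps_const (u ^ k) * (Abs_fps (\<lambda>n. of_nat (card (kdyck_paths k n))) - fps_const u))"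
  proof (rule fps_ext)
    fix n
    show "(?F * fps_const (1 - u) + fps_X * (?F * fps_const (u ^ (k + 1)))) $ n
        = (fps_X * (fps_const (u ^ k) * (Abs_fps (\<lambda>n. of_nat (card (kdyck_paths k n))) - fps_const u))) $ n"
    proof (cases n)
      case 0
      then show ?thesis by (simp add: F_paths_0 height_sum_def)
    next
      case (Suc m)
      then show ?thesis
        using height_sum_F_paths_rec[of k m u] by (simp add: mult.commute)
    qed
  qed
  finally show ?thesis by (simp add: fps_const_power mult.assoc)
qed

theorem mainTheorem1:
  fixes k :: nat
  assumes "k \<ge> 1"
  shows "1 - ubar k + fps_X * ubar k ^ (k+1) = 0
       \<and> F_gf k * (1 - U + fps_X * U ^ (k+1)) = fps_X * U ^ k * (ubar k - U)"
proof
  show "1 - ubar k + fps_X * ubar k ^ (k+1) = 0"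
    unfolding ubar_eq_raney_fps by (rule raney_fps_equation)
  have "ubar k = Abs_fps (\<lambda>n. of_nat (card (kdyck_paths k n)))"
    by (simp add: ubar_eq_raney_fps raney_fps_def card_kdyck_paths)
  moreover have "F_gf k = Abs_fps (\<lambda>n. height_sum k (F_paths k n) [:0, 1:])"
    by (simp add: F_gf_def height_sum_def monom_altdef)
  ultimately show "F_gf k * (1 - U + fps_X * U ^ (k+1)) = fps_X * U ^ k * (ubar k - U)"
    using height_sum_fps_equation[of k "[:0, 1:]"] by (simp add: U_def)
qed

end
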